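(* Let $p$ be a prime and let $\mathcal{S}$ be an infinite abelian group of exponent $p$ (i.e. $pg=0$ for all $g$), in the signature $(+,-,0)$. Let $I$ be the set of finite subgroups of $\mathcal{S}$, ordered by inclusion. Then $\lim_I\mathrm{Th}(A^* )=\mathrm{Th}(\mathcal{S}^* )$, where $A$ ranges over $I$.
   Context: For a structure $\mathcal{T}$ with universe $T$, $\mathrm{Th}(\mathcal{T}^* )$ is the set of sentences in $(+,-,0)$ expanded by a constant for each element of $T$ that are true in $\mathcal{T}$; these are regarded as subsets of the set of sentences with constants from the universe of $\mathcal{S}$. For a family $\{\Delta_i\}_{i\in I}$ indexed by a directed set: $\limsup_I \Delta_i=\{\theta: \forall i\ \exists j\ge i\ [\theta\in\Delta_j]\}$, $\liminf_I \Delta_i=\{\theta: \exists i\ \forall j\ge i\ [\theta\in\Delta_j]\}$, and $\lim_I\Delta_i=\Delta$ means both equal $\Delta$. *)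

theory Defs
  imports Main "HOL-Computational_Algebra.Primes"
begin

text \<open>First-order language in the signature (+,-,0) of abelian groups, with
  constants taken from the carrier type 'a (names for elements of the big
  structure S).  Variables are natural numbers.\<close>

datatype 'a trm = Var nat | Cst 'a | Zero | Plus "'a trm" "'a trm" | Minus "'a trm"

datatype 'a fm = FFalse | Eq "'a trm" "'a trm" | FNot "'a fm" | FAnd "'a fm" "'a fm"
  | FOr "'a fm" "'a fm" | FImp "'a fm" "'a fm" | FEx nat "'a fm" | FAll nat "'a fm"

primrec tval :: "(nat \<Rightarrow> 'a::ab_group_add) \<Rightarrow> 'a trm \<Rightarrow> 'a" where
  "tval e (Var n) = e n"
| "tval e (Cst c) = c"
| "tval e Zero = 0"
| "tval e (Plus s t) = tval e s + tval e t"
| "tval e (Minus t) = - tval e t"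

text \<open>Satisfaction in the substructure with universe A (operations inherited
  from the ambient group); quantifiers range over A.\<close>
primrec sat :: "'a::ab_group_add set \<Rightarrow> (nat \<Rightarrow> 'a) \<Rightarrow> 'a fm \<Rightarrow> bool" where
  "sat A e FFalse = False"
| "sat A e (Eq s t) = (tval e s = tval e t)"
| "sat A e (FNot f) = (\<not> sat A e f)"
| "sat A e (FAnd f g) = (sat A e f \<and> sat A e g)"
| "sat A e (FOr f g) = (sat A e f \<or> sat A e g)"
| "sat A e (FImp f g) = (sat A e f \<longrightarrow> sat A e g)"
| "sat A e (FEx x f) = (\<exists>a\<in>A. sat A (e(x := a)) f)"
| "sat A e (FAll x f) = (\<forall>a\<in>A. sat A (e(x := a)) f)"

primrec tvars :: "'a trm \<Rightarrow> nat set" where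
  "tvars (Var n) = {n}"
| "tvars (Cst c) = {}"
| "tvars Zero = {}"
| "tvars (Plus s t) = tvars s \<union> tvars t"
| "tvars (Minus t) = tvars t"

primrec tconsts :: "'a trm \<Rightarrow> 'a set" where
  "tconsts (Var n) = {}"
| "tconsts (Cst c) = {c}"
| "tconsts Zero = {}"
| "tconsts (Plus s t) = tconsts s \<union> tconsts t"
| "tconsts (Minus t) = tconsts t"

primrec fvars :: "'a fm \<Rightarrow> nat set" where
  "fvars FFalse = {}"
| "fvars (Eq s t) = tvars s \<union> tvars t"
| "fvars (FNot f) = fvars f"
| "fvars (FAnd f g) = fvars f \<union> fvars g"
| "fvars (FOr f g) = fvars f \<union> fvars g"
| "fvars (FImp f g) = fvars f \<union> fvars g"
| "fvars (FEx x f) = fvars f - {x}"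
| "fvars (FAll x f) = fvars f - {x}"

primrec fconsts :: "'a fm \<Rightarrow> 'a set" where
  "fconsts FFalse = {}"
| "fconsts (Eq s t) = tconsts s \<union> tconsts t"
| "fconsts (FNot f) = fconsts f"
| "fconsts (FAnd f g) = fconsts f \<union> fconsts g"
| "fconsts (FOr f g) = fconsts f \<union> fconsts g"
| "fconsts (FImp f g) = fconsts f \<union> fconsts g"
| "fconsts (FEx x f) = fconsts f"
| "fconsts (FAll x f) = fconsts f"

definition sentence :: "'a fm \<Rightarrow> bool" where
  "sentence f \<longleftrightarrow> fvars f = {}"

text \<open>Th(A*): sentences with constants from A true in the structure with universe A.
  (For a sentence the environment is irrelevant; we quantify over all of them.)\<close>
definition Th :: "'a::ab_group_add set \<Rightarrow> 'a fm set" where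
  "Th A = {f. sentence f \<and> fconsts f \<subseteq> A \<and> (\<forall>e. sat A e f)}"

primrec nsmul :: "nat \<Rightarrow> 'a::ab_group_add \<Rightarrow> 'a" where
  "nsmul 0 g = 0"
| "nsmul (Suc n) g = g + nsmul n g"

definition subgrp :: "'a::ab_group_add set \<Rightarrow> bool" where
  "subgrp A \<longleftrightarrow> 0 \<in> A \<and> (\<forall>x\<in>A. \<forall>y\<in>A. x + y \<in> A) \<and> (\<forall>x\<in>A. - x \<in> A)"

definition limsup_fam :: "'i set \<Rightarrow> ('i \<Rightarrow> 'i \<Rightarrow> bool) \<Rightarrow> ('i \<Rightarrow> 'b set) \<Rightarrow> 'b set" where
  "limsup_fam I le D = {\<theta>. \<forall>i\<in>I. \<exists>j\<in>I. le i j \<and> \<theta> \<in> D j}"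

definition liminf_fam :: "'i set \<Rightarrow> ('i \<Rightarrow> 'i \<Rightarrow> bool) \<Rightarrow> ('i \<Rightarrow> 'b set) \<Rightarrow> 'b set" where
  "liminf_fam I le D = {\<theta>. \<exists>i\<in>I. \<forall>j\<in>I. le i j \<longrightarrow> \<theta> \<in> D j}"

definition lim_fam_eq :: "'i set \<Rightarrow> ('i \<Rightarrow> 'i \<Rightarrow> bool) \<Rightarrow> ('i \<Rightarrow> 'b set) \<Rightarrow> 'b set \<Rightarrow> bool" where
  "lim_fam_eq I le D L \<longleftrightarrow> limsup_fam I le D = L \<and> liminf_fam I le D = L"

end

theory Submission
  imports Defs "HOL-Library.FuncSet"
begin

text \<open>In a group of prime exponent p, if a lies outside the subgroup generated by finitely
  many parameters and w is a term in them, then k a + w = 0 only when p divides k and w = 0.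
  So the equations satisfied by a tuple extended by a new element depend only on whether, and
  as which term, the element lies in the subgroup generated so far, and that subgroup has at
  most p^(number of generators) elements. If a subgroup A has more than p^(d + c) elements,
  Duplicator therefore wins the d-round Ehrenfeucht-Fra\<ins>ss\<eacute> game between A and the
  whole group with c constants: an element of the generated subgroup is answered by the same
  term, any other element by an element outside the other side's generated subgroup. Hence A
  and the whole group satisfy the same sentences of quantifier depth d with c constants from A,
  and since every finite set lies in arbitrarily large finite subgroups, each sentence eventually
  belongs to Th(A*) exactly when it belongs to Th(S*).\<close>

lemma nsmul_add: "nsmul (m + n) g = nsmul m g + nsmul n (g::'a::ab_group_add)"
  by (induct m) (auto simp: algebra_simps)

lemma nsmul_mult: "nsmul (m * n) g = nsmul m (nsmul n (g::'a::ab_group_add))"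
  by (induct m) (auto simp: nsmul_add)

lemma nsmul_neg: "nsmul n (- g) = - nsmul n (g::'a::ab_group_add)"
  by (induct n) (auto simp: algebra_simps)

lemma nsmul_zero [simp]: "nsmul n (0::'a::ab_group_add) = 0"
  by (induct n) auto

lemma nsmul_mod:
  assumes exp: "\<forall>g::'a::ab_group_add. nsmul p g = 0"
  shows "nsmul (n mod p) (g::'a) = nsmul n g"
proof -
  have "nsmul n g = nsmul (n mod p) g + nsmul (n div p) (nsmul p g)"
    by (metis mod_mult_div_eq mult.commute nsmul_add nsmul_mult)
  then show ?thesis
    using exp by simp
qed

lemma nsmul_diff_one:
  assumes exp: "\<forall>g::'a::ab_group_add. nsmul p g = 0" and "0 < p"
  shows "nsmul (p - 1) (g::'a) = - g"
proof -
  have "g + nsmul (p - 1) g = nsmul (Suc (p - 1)) g"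
    by simp
  also have "\<dots> = 0"
    using assms by simp
  finally show ?thesis
    by (metis neg_eq_iff_add_eq_0)
qed

lemma sum_nsmul_indicator:
  assumes "finite X" "z \<in> X"
  shows "(\<Sum>y\<in>X. nsmul (if y = z then 1 else 0) y) = (z::'a::ab_group_add)"
proof -
  have "(\<Sum>y\<in>X. nsmul (if y = z then 1 else 0) y) = (\<Sum>y\<in>X. if y = z then y else 0)"
    by (rule sum.cong) auto
  then show ?thesis
    using assms by simp
qed

primrec subst_var :: "nat \<Rightarrow> 'a trm \<Rightarrow> 'a trm \<Rightarrow> 'a trm" where
  "subst_var x u (Var n) = (if n = x then u else Var n)"
| "subst_var x u (Cst c) = Cst c"
| "subst_var x u Zero = Zero"
| "subst_var x u (Plus s t) = Plus (subst_var x u s) (subst_var x u t)"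
| "subst_var x u (Minus t) = Minus (subst_var x u t)"

lemma tval_subst_var: "tval e (subst_var x u s) = tval (e(x := tval e u)) s"
  by (induct s) auto

lemma tvars_subst_var: "tvars (subst_var x u s) \<subseteq> (tvars s - {x}) \<union> tvars u"
  by (induct s) auto

lemma tconsts_subst_var: "tconsts (subst_var x u s) \<subseteq> tconsts s \<union> tconsts u"
  by (induct s) auto

text \<open>Coefficient of the variable x in a term, read modulo p: negation multiplies it by p - 1.\<close>

primrec var_coeff :: "nat \<Rightarrow> nat \<Rightarrow> 'a trm \<Rightarrow> nat" where
  "var_coeff p x (Var n) = (if n = x then 1 else 0)"
| "var_coeff p x (Cst c) = 0"
| "var_coeff p x Zero = 0"
| "var_coeff p x (Plus s t) = var_coeff p x s + var_coeff p x t"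
| "var_coeff p x (Minus t) = (p - 1) * var_coeff p x t"

lemma tval_fun_upd_eq_var_coeff:
  assumes exp: "\<forall>g::'a::ab_group_add. nsmul p g = 0" and "0 < p"
  shows "tval (e(x := (a::'a))) u = nsmul (var_coeff p x u) a + tval e (subst_var x Zero u)"
proof (induct u)
  case (Plus s t)
  then show ?case
    by (simp add: nsmul_add algebra_simps)
next
  case (Minus t)
  have "nsmul ((p - 1) * var_coeff p x t) a = - nsmul (var_coeff p x t) a"
    by (simp only: nsmul_mult nsmul_diff_one[OF assms])
  with Minus show ?case
    by (simp add: nsmul_neg)
qed auto

primrec trm_nsmul :: "nat \<Rightarrow> 'a trm \<Rightarrow> 'a trm" where
  "trm_nsmul 0 t = Zero"
| "trm_nsmul (Suc n) t = Plus t (trm_nsmul n t)"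

lemma tval_trm_nsmul: "tval e (trm_nsmul n t) = nsmul n (tval e t)"
  by (induct n) auto

lemma tvars_trm_nsmul: "tvars (trm_nsmul n t) \<subseteq> tvars t"
  by (induct n) auto

lemma tconsts_trm_nsmul: "tconsts (trm_nsmul n t) \<subseteq> tconsts t"
  by (induct n) auto

lemma finite_tconsts: "finite (tconsts t)"
  by (induct t) auto

lemma finite_fconsts: "finite (fconsts f)"
  by (induct f) (auto simp: finite_tconsts)

definition term_span :: "(nat \<Rightarrow> 'a::ab_group_add) \<Rightarrow> nat set \<Rightarrow> 'a set \<Rightarrow> 'a set" where
  "term_span e V C = {tval e t | t. tvars t \<subseteq> V \<and> tconsts t \<subseteq> C}"

lemma tval_in_term_span: "tvars t \<subseteq> V \<Longrightarrow> tconsts t \<subseteq> C \<Longrightarrow> tval e t \<in> term_span e V C"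
  unfolding term_span_def by blast

lemma subgrp_term_span: "subgrp (term_span e V C)"
  unfolding subgrp_def term_span_def
  by (force intro: exI[of _ Zero] exI[of _ "Plus _ _"] exI[of _ "Minus _"])

lemma subset_term_span: "C \<subseteq> term_span e V C"
  using tval_in_term_span[of "Cst _"] by auto

lemma tval_in_subgrp:
  assumes "subgrp B" "e ` V \<subseteq> B" "tconsts t \<subseteq> B"
  shows "tvars t \<subseteq> V \<Longrightarrow> tval e t \<in> B"
  using assms(3) by (induct t) (use assms(1,2) in \<open>auto simp: subgrp_def\<close>)

lemma tval_eq_lin_comb:
  assumes exp: "\<forall>g::'a::ab_group_add. nsmul p g = 0" and "0 < p"
    and X: "finite X" "e ` V \<subseteq> X" "C \<subseteq> X"
  shows "tvars t \<subseteq> V \<Longrightarrow> tconsts t \<subseteq> C \<Longrightarrow> \<exists>f. tval e t = (\<Sum>y\<in>X. nsmul (f y) (y::'a))"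
proof (induct t)
  case (Var n)
  then have "e n \<in> X"
    using X by auto
  then show ?case
    using sum_nsmul_indicator[OF X(1)] by (metis tval.simps(1))
next
  case (Cst c)
  then have "c \<in> X"
    using X by auto
  then show ?case
    using sum_nsmul_indicator[OF X(1)] by (metis tval.simps(2))
next
  case Zero
  show ?case
    by (rule exI[of _ "\<lambda>_. 0"]) simp
next
  case (Plus s t)
  then obtain f g where "tval e s = (\<Sum>y\<in>X. nsmul (f y) y)" "tval e t = (\<Sum>y\<in>X. nsmul (g y) y)"
    by auto
  then have "tval e (Plus s t) = (\<Sum>y\<in>X. nsmul (f y + g y) y)"
    by (simp add: nsmul_add sum.distrib)
  then show ?case
    by (rule exI[of _ "\<lambda>y. f y + g y"])
next
  case (Minus t)
  then obtain f where "tval e t = (\<Sum>y\<in>X. nsmul (f y) y)"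
    by auto
  then have "tval e (Minus t) = (\<Sum>y\<in>X. nsmul ((p - 1) * f y) y)"
    by (simp add: nsmul_mult nsmul_diff_one[OF assms(1,2), simplified] sum_negf)
  then show ?case
    by (rule exI[of _ "\<lambda>y. (p - 1) * f y"])
qed

lemma lin_comb_mod:
  assumes exp: "\<forall>g::'a::ab_group_add. nsmul p g = 0" and "0 < p"
  shows "(\<Sum>y\<in>X. nsmul (f y) (y::'a)) \<in> (\<lambda>f. \<Sum>y\<in>X. nsmul (f y) y) ` (X \<rightarrow>\<^sub>E {..<p})"
proof
  show "restrict (\<lambda>y. f y mod p) X \<in> X \<rightarrow>\<^sub>E {..<p}"
    using \<open>0 < p\<close> by (simp add: restrict_PiE_iff)
  show "(\<Sum>y\<in>X. nsmul (f y) y) = (\<Sum>y\<in>X. nsmul (restrict (\<lambda>y. f y mod p) X y) y)"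
    by (rule sum.cong) (simp_all add: nsmul_mod[OF exp])
qed

lemma finite_card_term_span:
  assumes exp: "\<forall>g::'a::ab_group_add. nsmul p g = 0" and "0 < p"
    and "finite V" "finite C"
  shows "finite (term_span e V (C::'a set)) \<and> card (term_span e V C) \<le> p ^ (card V + card C)"
proof -
  define X where "X = e ` V \<union> C"
  have X: "finite X" "e ` V \<subseteq> X" "C \<subseteq> X"
    using assms by (auto simp: X_def)
  let ?lin = "(\<lambda>f. \<Sum>y\<in>X. nsmul (f y) y) ` (X \<rightarrow>\<^sub>E {..<p})"
  have span: "term_span e V C \<subseteq> ?lin"
    unfolding term_span_def using tval_eq_lin_comb[OF exp \<open>0 < p\<close> X] lin_comb_mod[OF exp \<open>0 < p\<close>]
    by fastforce
  have fin: "finite (X \<rightarrow>\<^sub>E {..<p})"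
    using X by (simp add: finite_PiE)
  have "card X \<le> card V + card C"
    unfolding X_def using card_Un_le[of "e ` V" C] card_image_le[OF \<open>finite V\<close>, of e] by linarith
  then have "card (X \<rightarrow>\<^sub>E {..<p}) \<le> p ^ (card V + card C)"
    using X \<open>0 < p\<close> by (simp add: card_PiE power_increasing)
  moreover have "card (term_span e V C) \<le> card (X \<rightarrow>\<^sub>E {..<p})"
    using card_mono[OF finite_imageI[OF fin] span] card_image_le[OF fin] by (rule order_trans)
  ultimately show ?thesis
    using finite_subset[OF span finite_imageI[OF fin]] by linarith
qed

lemma nsmul_add_eq_0_iff_not_in_term_span:
  assumes exp: "\<forall>g::'a::ab_group_add. nsmul p g = 0" and "prime p"
    and a: "(a::'a) \<notin> term_span e V C" and w: "tvars w \<subseteq> V" "tconsts w \<subseteq> C"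
  shows "nsmul k a + tval e w = 0 \<longleftrightarrow> p dvd k \<and> tval e w = 0"
proof (cases "p dvd k")
  case True
  then show ?thesis
    using exp by (auto simp: nsmul_mult)
next
  case False
  have "nsmul k a + tval e w \<noteq> 0"
  proof
    assume k_a: "nsmul k a + tval e w = 0"
    from False \<open>prime p\<close> have "coprime k p"
      by (metis prime_imp_coprime coprime_commute)
    moreover have "k \<noteq> 0"
      using False by (metis dvd_0_right)
    ultimately obtain u v where uv: "k * u = p * v + 1"
      using bezout_nat[of k p] by auto
    have "a = nsmul (k * u) a"
      using exp by (simp add: uv nsmul_add nsmul_mult)
    also have "\<dots> = nsmul u (- tval e w)"
      using k_a by (metis add_eq_0_iff2 mult.commute nsmul_mult)
    also have "\<dots> = tval e (trm_nsmul u (Minus w))"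
      by (simp add: tval_trm_nsmul)
    finally have "a \<in> term_span e V C"
      using w tvars_trm_nsmul[of u "Minus w"] tconsts_trm_nsmul[of u "Minus w"]
      by (metis order_trans tval_in_term_span tconsts.simps(5) tvars.simps(5))
    with a show False ..
  qed
  with False show ?thesis
    by simp
qed

text \<open>The map e x \<mapsto> e' x (x \<in> V), fixing C pointwise, is a partial isomorphism.\<close>

definition eqs_agree :: "(nat \<Rightarrow> 'a::ab_group_add) \<Rightarrow> (nat \<Rightarrow> 'a) \<Rightarrow> nat set \<Rightarrow> 'a set \<Rightarrow> bool" where
  "eqs_agree e e' V C \<longleftrightarrow> (\<forall>s t. tvars s \<subseteq> V \<longrightarrow> tvars t \<subseteq> V \<longrightarrow> tconsts s \<subseteq> C \<longrightarrow> tconsts t \<subseteq> C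
      \<longrightarrow> (tval e s = tval e t \<longleftrightarrow> tval e' s = tval e' t))"

lemma eqs_agree_sym: "eqs_agree e e' V C \<Longrightarrow> eqs_agree e' e V C"
  unfolding eqs_agree_def by blast

lemma eqs_agree_fun_upd_tval:
  assumes agree: "eqs_agree e e' V C" and u: "tvars u \<subseteq> V" "tconsts u \<subseteq> C"
  shows "eqs_agree (e(x := tval e u)) (e'(x := tval e' u)) (insert x V) C"
  unfolding eqs_agree_def
proof (intro allI impI)
  fix s t
  assume "tvars s \<subseteq> insert x V" "tvars t \<subseteq> insert x V" "tconsts s \<subseteq> C" "tconsts t \<subseteq> C"
  then have "tvars (subst_var x u s) \<subseteq> V" "tvars (subst_var x u t) \<subseteq> V"
    "tconsts (subst_var x u s) \<subseteq> C" "tconsts (subst_var x u t) \<subseteq> C"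
    using u tvars_subst_var[of x u] tconsts_subst_var[of x u] by blast+
  then show "tval (e(x := tval e u)) s = tval (e(x := tval e u)) t \<longleftrightarrow>
      tval (e'(x := tval e' u)) s = tval (e'(x := tval e' u)) t"
    using agree unfolding eqs_agree_def tval_subst_var[symmetric] by blast
qed

lemma eqs_agree_fun_upd_not_in_term_span:
  assumes exp: "\<forall>g::'a::ab_group_add. nsmul p g = 0" and "prime p"
    and agree: "eqs_agree e e' V (C::'a set)"
    and a: "a \<notin> term_span e V C" and b: "b \<notin> term_span e' V C"
  shows "eqs_agree (e(x := a)) (e'(x := b)) (insert x V) C"
  unfolding eqs_agree_def
proof (intro allI impI)
  fix s t :: "'a trm"
  assume st: "tvars s \<subseteq> insert x V" "tvars t \<subseteq> insert x V" "tconsts s \<subseteq> C" "tconsts t \<subseteq> C"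
  define u where "u = Plus s (Minus t)"
  define w where "w = subst_var x Zero u"
  have w: "tvars w \<subseteq> V" "tconsts w \<subseteq> C"
    using tvars_subst_var[of x Zero u] tconsts_subst_var[of x Zero u] st
    by (auto simp: w_def u_def)
  have "0 < p"
    using \<open>prime p\<close> prime_gt_0_nat by blast
  have "tval e w = 0 \<longleftrightarrow> tval e' w = 0"
    using agree w unfolding eqs_agree_def by (metis tconsts.simps(3) tval.simps(3) tvars.simps(3) empty_subsetI)
  moreover have "tval (e(x := a)) u = nsmul (var_coeff p x u) a + tval e w"
    "tval (e'(x := b)) u = nsmul (var_coeff p x u) b + tval e' w"
    unfolding w_def by (rule tval_fun_upd_eq_var_coeff[OF exp \<open>0 < p\<close>])+
  moreover have "tval E s = tval E t \<longleftrightarrow> tval E u = 0" for E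
    by (simp add: u_def)
  ultimately show "tval (e(x := a)) s = tval (e(x := a)) t \<longleftrightarrow> tval (e'(x := b)) s = tval (e'(x := b)) t"
    using nsmul_add_eq_0_iff_not_in_term_span[OF exp \<open>prime p\<close> a w]
      nsmul_add_eq_0_iff_not_in_term_span[OF exp \<open>prime p\<close> b w]
    by simp
qed

text \<open>B has room for n more generators beyond C: by the cardinality bound on term spans,
  no subgroup generated by C and n elements exhausts B.\<close>

definition ample :: "nat \<Rightarrow> 'a set \<Rightarrow> nat \<Rightarrow> 'a set \<Rightarrow> bool" where
  "ample p C n B \<longleftrightarrow> infinite B \<or> p ^ (n + card C) < card B"

lemma ample_mono: "ample p C n B \<Longrightarrow> m \<le> n \<Longrightarrow> 0 < p \<Longrightarrow> ample p C m B"
  unfolding ample_def using power_increasing[of "m + card C" "n + card C" p] by auto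

lemma ample_obtains_not_in_term_span:
  assumes exp: "\<forall>g::'a::ab_group_add. nsmul p g = 0" and "0 < p"
    and "finite V" "finite C" "card V \<le> n" and B: "ample p (C::'a set) n B"
  obtains b where "b \<in> B" "b \<notin> term_span e V C"
proof -
  have span: "finite (term_span e V C)" "card (term_span e V C) \<le> p ^ (card V + card C)"
    using finite_card_term_span[OF exp assms(2-4)] by auto
  have "p ^ (card V + card C) \<le> p ^ (n + card C)"
    using assms(2,5) by (intro power_increasing) auto
  with span B have "\<not> B \<subseteq> term_span e V C"
    unfolding ample_def by (metis card_mono finite_subset leD le_trans)
  then show ?thesis
    using that by blast
qed

lemma eqs_agree_extend:
  assumes exp: "\<forall>g::'a::ab_group_add. nsmul p g = 0" and "prime p"
    and agree: "eqs_agree e e' V C" and "finite V" "finite C"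
    and B: "subgrp B" "C \<subseteq> B" "e' ` V \<subseteq> B" "ample p (C::'a set) (card V) B"
  shows "\<exists>b\<in>B. eqs_agree (e(x := a)) (e'(x := b)) (insert x V) C"
proof (cases "a \<in> term_span e V C")
  case True
  then obtain u where "a = tval e u" "tvars u \<subseteq> V" "tconsts u \<subseteq> C"
    unfolding term_span_def by auto
  moreover from this have "tval e' u \<in> B"
    using tval_in_subgrp[OF B(1,3)] B(2) by blast
  ultimately show ?thesis
    using eqs_agree_fun_upd_tval[OF agree] by blast
next
  case False
  have "0 < p"
    using \<open>prime p\<close> prime_gt_0_nat by blast
  obtain b where "b \<in> B" "b \<notin> term_span e' V C"
    using ample_obtains_not_in_term_span[OF exp \<open>0 < p\<close> assms(4,5) le_refl B(4)] .
  then show ?thesis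
    using eqs_agree_fun_upd_not_in_term_span[OF exp \<open>prime p\<close> agree False] by blast
qed

text \<open>Duplicator's winning condition in the Ehrenfeucht-Fra\<ins>ss\<eacute> game on A and B with
  constants C and n rounds left, after the positions V have been played as e in A and e' in B.\<close>

definition ef_position ::
    "nat \<Rightarrow> 'a::ab_group_add set \<Rightarrow> nat \<Rightarrow> 'a set \<Rightarrow> 'a set \<Rightarrow> nat set \<Rightarrow> (nat \<Rightarrow> 'a) \<Rightarrow> (nat \<Rightarrow> 'a) \<Rightarrow> bool"
  where "ef_position p C n A B V e e' \<longleftrightarrow> finite V \<and> eqs_agree e e' V C \<and> e ` V \<subseteq> A \<and> e' ` V \<subseteq> B
    \<and> ample p C (card V + n) A \<and> ample p C (card V + n) B"

lemma ef_position_sym: "ef_position p C n A B V e e' \<Longrightarrow> ef_position p C n B A V e' e"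
  unfolding ef_position_def using eqs_agree_sym[of e e' V C] by auto

lemma ef_position_extend:
  assumes exp: "\<forall>g::'a::ab_group_add. nsmul p g = 0" and "prime p"
    and B: "subgrp B" "C \<subseteq> B" and "finite C"
    and pos: "ef_position p C (Suc n) A B V e e'" and "a \<in> A"
  shows "\<exists>b\<in>B. ef_position p (C::'a set) n A B (insert x V) (e(x := a)) (e'(x := b))"
proof -
  have "0 < p"
    using \<open>prime p\<close> prime_gt_0_nat by blast
  from pos have V: "finite V" "eqs_agree e e' V C" "e ` V \<subseteq> A" "e' ` V \<subseteq> B"
    and ample: "ample p C (card V + Suc n) A" "ample p C (card V + Suc n) B"
    unfolding ef_position_def by auto
  have "ample p C (card V) B"
    using ample_mono[OF ample(2) _ \<open>0 < p\<close>] by simp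
  then obtain b where "b \<in> B" "eqs_agree (e(x := a)) (e'(x := b)) (insert x V) C"
    using eqs_agree_extend[OF exp \<open>prime p\<close> V(2,1) \<open>finite C\<close> B V(4)] by blast
  moreover have "card (insert x V) + n \<le> card V + Suc n"
    using V(1) by (simp add: card_insert_if)
  moreover have "e(x := a) ` insert x V \<subseteq> A" "e'(x := b) ` insert x V \<subseteq> B"
    using V(3,4) \<open>a \<in> A\<close> \<open>b \<in> B\<close> by auto
  ultimately show ?thesis
    using V(1) ample_mono[OF ample(1) _ \<open>0 < p\<close>] ample_mono[OF ample(2) _ \<open>0 < p\<close>]
    unfolding ef_position_def by blast
qed

lemma ef_position_back_and_forth:
  assumes exp: "\<forall>g::'a::ab_group_add. nsmul p g = 0" and "prime p"
    and A: "subgrp A" "C \<subseteq> A" and B: "subgrp B" "C \<subseteq> B" and "finite (C::'a set)"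
    and pos: "ef_position p C (Suc n) A B V e e'"
  shows "\<forall>a\<in>A. \<exists>b\<in>B. ef_position p C n A B (insert x V) (e(x := a)) (e'(x := b))"
    and "\<forall>b\<in>B. \<exists>a\<in>A. ef_position p C n A B (insert x V) (e(x := a)) (e'(x := b))"
proof -
  show "\<forall>a\<in>A. \<exists>b\<in>B. ef_position p C n A B (insert x V) (e(x := a)) (e'(x := b))"
    using ef_position_extend[OF exp \<open>prime p\<close> B \<open>finite C\<close> pos] by blast
  have "\<forall>b\<in>B. \<exists>a\<in>A. ef_position p C n B A (insert x V) (e'(x := b)) (e(x := a))"
    using ef_position_extend[OF exp \<open>prime p\<close> A \<open>finite C\<close> ef_position_sym[OF pos]] by blast
  then show "\<forall>b\<in>B. \<exists>a\<in>A. ef_position p C n A B (insert x V) (e(x := a)) (e'(x := b))"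
    by (meson ef_position_sym)
qed

primrec qdepth :: "'a fm \<Rightarrow> nat" where
  "qdepth FFalse = 0"
| "qdepth (Eq s t) = 0"
| "qdepth (FNot f) = qdepth f"
| "qdepth (FAnd f g) = max (qdepth f) (qdepth g)"
| "qdepth (FOr f g) = max (qdepth f) (qdepth g)"
| "qdepth (FImp f g) = max (qdepth f) (qdepth g)"
| "qdepth (FEx x f) = Suc (qdepth f)"
| "qdepth (FAll x f) = Suc (qdepth f)"

lemma sat_quantifier_iff:
  assumes "\<forall>a\<in>A. \<exists>b\<in>B. R a b" "\<forall>b\<in>B. \<exists>a\<in>A. R a b"
    and "\<And>a b. R a b \<Longrightarrow> sat A (e(x := a)) f \<longleftrightarrow> sat B (e'(x := b)) f"
  shows "sat A e (FEx x f) \<longleftrightarrow> sat B e' (FEx x f)" "sat A e (FAll x f) \<longleftrightarrow> sat B e' (FAll x f)"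
  using assms by (simp; metis)+

lemma sat_iff_if_ef_position:
  assumes exp: "\<forall>g::'a::ab_group_add. nsmul p g = 0" and "prime p"
    and A: "subgrp A" "C \<subseteq> A" and B: "subgrp B" "C \<subseteq> B" and "finite (C::'a set)"
  shows "ef_position p C n A B V e e' \<Longrightarrow> fvars \<phi> \<subseteq> V \<Longrightarrow> fconsts \<phi> \<subseteq> C \<Longrightarrow> qdepth \<phi> \<le> n
    \<Longrightarrow> sat A e \<phi> \<longleftrightarrow> sat B e' \<phi>"
proof (induct \<phi> arbitrary: e e' V n)
  case (Eq s t)
  then show ?case
    unfolding ef_position_def eqs_agree_def by simp
next
  case (FEx x f)
  then obtain m where pos: "ef_position p C (Suc m) A B V e e'" and "qdepth f \<le> m"
    by (cases n) auto
  have "sat A (e(x := a)) f \<longleftrightarrow> sat B (e'(x := b)) f"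
    if "ef_position p C m A B (insert x V) (e(x := a)) (e'(x := b))" for a b
    using FEx.prems(2,3) by (intro FEx.hyps[OF that _ _ \<open>qdepth f \<le> m\<close>]) auto
  then show ?case
    by (rule sat_quantifier_iff(1)[OF ef_position_back_and_forth[OF exp \<open>prime p\<close> A B \<open>finite C\<close> pos]])
next
  case (FAll x f)
  then obtain m where pos: "ef_position p C (Suc m) A B V e e'" and "qdepth f \<le> m"
    by (cases n) auto
  have "sat A (e(x := a)) f \<longleftrightarrow> sat B (e'(x := b)) f"
    if "ef_position p C m A B (insert x V) (e(x := a)) (e'(x := b))" for a b
    using FAll.prems(2,3) by (intro FAll.hyps[OF that _ _ \<open>qdepth f \<le> m\<close>]) auto
  then show ?case
    by (rule sat_quantifier_iff(2)[OF ef_position_back_and_forth[OF exp \<open>prime p\<close> A B \<open>finite C\<close> pos]])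
next
  case (FNot f)
  then show ?case
    by simp
next
  case (FAnd f g)
  then have "sat A e f \<longleftrightarrow> sat B e' f" "sat A e g \<longleftrightarrow> sat B e' g"
    by (auto intro!: FAnd.hyps[where V = V and n = n])
  then show ?case
    by simp
next
  case (FOr f g)
  then have "sat A e f \<longleftrightarrow> sat B e' f" "sat A e g \<longleftrightarrow> sat B e' g"
    by (auto intro!: FOr.hyps[where V = V and n = n])
  then show ?case
    by simp
next
  case (FImp f g)
  then have "sat A e f \<longleftrightarrow> sat B e' f" "sat A e g \<longleftrightarrow> sat B e' g"
    by (auto intro!: FImp.hyps[where V = V and n = n])
  then show ?case
    by simp
qed simp

lemma Th_finite_subgrp_iff_Th_UNIV:
  assumes exp: "\<forall>g::'a::ab_group_add. nsmul p g = 0" and "prime p"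
    and "infinite (UNIV :: 'a set)" and A: "subgrp A" "fconsts \<theta> \<subseteq> (A::'a set)"
    and large: "p ^ (qdepth \<theta> + card (fconsts \<theta>)) < card A"
  shows "\<theta> \<in> Th A \<longleftrightarrow> \<theta> \<in> Th UNIV"
proof -
  have "sat A e \<theta> \<longleftrightarrow> sat UNIV e \<theta>" if "sentence \<theta>" for e
  proof (rule sat_iff_if_ef_position[OF exp \<open>prime p\<close> A _ _ finite_fconsts])
    show "ef_position p (fconsts \<theta>) (qdepth \<theta>) A UNIV {} e e"
      using large \<open>infinite UNIV\<close> by (simp add: ef_position_def eqs_agree_def ample_def)
  qed (use that in \<open>auto simp: sentence_def subgrp_def\<close>)
  then show ?thesis
    using A by (auto simp: Th_def)
qed

lemma large_finite_subgrp_exists: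
  assumes exp: "\<forall>g::'a::ab_group_add. nsmul p g = 0" and "0 < p"
    and "infinite (UNIV :: 'a set)" and "finite (F::'a set)"
  obtains A where "subgrp A" "finite A" "F \<subseteq> A" "N < card A"
proof -
  obtain Y :: "'a set" where Y: "finite Y" "card Y = Suc N"
    using infinite_arbitrarily_large[OF \<open>infinite UNIV\<close>] by blast
  define A where "A = term_span (\<lambda>_. 0) {} (F \<union> Y)"
  have "finite A"
    using finite_card_term_span[OF exp \<open>0 < p\<close>, of "{}" "F \<union> Y"] Y(1) \<open>finite F\<close> by (simp add: A_def)
  moreover have "F \<union> Y \<subseteq> A"
    unfolding A_def by (rule subset_term_span)
  moreover from calculation have "card Y \<le> card A"
    by (meson card_mono le_sup_iff)
  ultimately show ?thesis
    using Y(2) by (intro that[of A]) (auto simp: A_def subgrp_term_span)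
qed

lemma lim_fam_eq_if_eventually_eq:
  assumes directed: "\<And>i k. i \<in> I \<Longrightarrow> k \<in> I \<Longrightarrow> \<exists>j\<in>I. le i j \<and> le k j"
    and eventually: "\<And>\<theta>. \<exists>i\<in>I. \<forall>j\<in>I. le i j \<longrightarrow> (\<theta> \<in> D j \<longleftrightarrow> \<theta> \<in> L)"
  shows "lim_fam_eq I le D L"
proof -
  have "\<theta> \<in> limsup_fam I le D \<longleftrightarrow> \<theta> \<in> L" "\<theta> \<in> liminf_fam I le D \<longleftrightarrow> \<theta> \<in> L" for \<theta>
  proof -
    obtain i0 where "i0 \<in> I" "\<forall>j\<in>I. le i0 j \<longrightarrow> (\<theta> \<in> D j \<longleftrightarrow> \<theta> \<in> L)"
      using eventually by blast
    then show "\<theta> \<in> limsup_fam I le D \<longleftrightarrow> \<theta> \<in> L" "\<theta> \<in> liminf_fam I le D \<longleftrightarrow> \<theta> \<in> L"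
      unfolding limsup_fam_def liminf_fam_def using directed by (simp; meson)+
  qed
  then show ?thesis
    unfolding lim_fam_eq_def by blast
qed

theorem mainTheorem12:
  fixes p :: nat
  assumes "prime p"
    and "infinite (UNIV :: 'a::ab_group_add set)"
    and "\<forall>g::'a. nsmul p g = 0"
  shows "lim_fam_eq {A :: 'a set. subgrp A \<and> finite A} (\<subseteq>) Th (Th (UNIV :: 'a set))"
proof (rule lim_fam_eq_if_eventually_eq)
  have "0 < p"
    using \<open>prime p\<close> prime_gt_0_nat by blast
  note large_subgrp = large_finite_subgrp_exists[OF assms(3) \<open>0 < p\<close> assms(2)]
  show "\<exists>j\<in>{A. subgrp A \<and> finite A}. i \<subseteq> j \<and> k \<subseteq> j"
    if "i \<in> {A. subgrp A \<and> finite A}" "k \<in> {A. subgrp A \<and> finite A}" for i k :: "'a set"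
    using that large_subgrp[of "i \<union> k"] by (metis (no_types, lifting) finite_Un le_sup_iff mem_Collect_eq)
  fix \<theta> :: "'a fm"
  obtain i where i: "subgrp i" "finite i" "fconsts \<theta> \<subseteq> i" "p ^ (qdepth \<theta> + card (fconsts \<theta>)) < card i"
    using large_subgrp[OF finite_fconsts] by blast
  have "\<theta> \<in> Th j \<longleftrightarrow> \<theta> \<in> Th UNIV" if "subgrp j" "finite j" "i \<subseteq> j" for j
    using i that card_mono[of j i]
    by (intro Th_finite_subgrp_iff_Th_UNIV[OF assms(3,1,2)]) auto
  with i show "\<exists>i\<in>{A. subgrp A \<and> finite A}. \<forall>j\<in>{A. subgrp A \<and> finite A}. i \<subseteq> j \<longrightarrow> (\<theta> \<in> Th j \<longleftrightarrow> \<theta> \<in> Th UNIV)"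
    by blast
qed

end
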